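(* Let $\tau \ge 0$ be rational and let $(G,k)$ be an instance of $\tau$-Bounded-Density Edge Deletion, where $G$ has $m_G$ edges. Construct the 2-Layer General Transshipment instance $(D, c, \mathcal{B})$ as follows: $V(D) = V(G) \cup E(G)$ with $U = E(G)$ and $W = V(G)$; for every edge $e = \{u,v\} \in E(G)$ add the arcs $(e,u)$ and $(e,v)$ with capacity $1$; set $B_e = \{0,1\}$ for every $e \in E(G)$ and $B_v = [-\tau, 0]$ for every $v \in V(G)$. Then there is a $\mathcal{B}$-transshipment $f$ in $D$ with $\mathrm{val}(f) \ge m_G - k$ if and only if there is an edge set $F \subseteq E(G)$ with $|F| \le k$ and $\rho^*(G - F) \le \tau$.
   Context: Graphs are simple and undirected; the density of a graph with $n$ vertices and $m$ edges is $m/n$ (the empty graph has density $0$) and $\rho^*(G)$ is the maximum density of a subgraph of $G$. The problem $\tau$-Bounded-Density Edge Deletion asks, given $G$ and $k \in \mathbb{N}$, whether some $F \subseteq E(G)$ with $|F| \le k$ satisfies $\rho^*(G-F) \le \tau$. A digraph $D$ is 2-layered with parts $U, W$ if $V(D) = U \cup W$ is a disjoint union and $A(D) \subseteq U \times W$. An instance of 2-Layer General Transshipment consists of a 2-layered digraph $D$ with parts $U,W$, capacities $c: A(D) \to \mathbb{Q}_{\ge 0}$, and a collection $\mathcal{B} = \{B_v : v \in V(D)\}$ with $B_v \subseteq \mathbb{Q}_{\ge 0}$ for $v \in U$ and $B_v \subseteq \mathbb{Q}_{\le 0}$ for $v \in W$. For a function $f: A(D) \to \mathbb{Q}_{\ge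 0}$, the excess at $v$ is $f_\Sigma(v) = \sum_{(v,x) \in A(D)} f(v,x) - \sum_{(x,v) \in A(D)} f(x,v)$. A $\mathcal{B}$-transshipment is a function $f: A(D) \to \mathbb{Q}_{\ge 0}$ with $f(a) \le c(a)$ for all arcs $a$ and $f_\Sigma(v) \in B_v$ for all $v \in V(D)$. Its value is $\mathrm{val}(f) = \sum_{u \in U} f_\Sigma(u)$. The problem is to find a $\mathcal{B}$-transshipment of maximum value. *)

theory Defs
  imports Complex_Main
begin

definition simple_graph :: "'a set \<Rightarrow> 'a set set \<Rightarrow> bool" where
  "simple_graph V E \<longleftrightarrow> finite V \<and> (\<forall>e\<in>E. e \<subseteq> V \<and> card e = 2)"

definition density :: "'a set \<Rightarrow> 'a set set \<Rightarrow> rat" where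
  "density V E = (if V = {} then 0 else of_nat (card E) / of_nat (card V))"

definition rho_star :: "'a set \<Rightarrow> 'a set set \<Rightarrow> rat" where
  "rho_star V E = Max {density V' E' | V' E'. V' \<subseteq> V \<and> E' \<subseteq> E \<and> (\<forall>e\<in>E'. e \<subseteq> V')}"

definition excess :: "('v \<times> 'v) set \<Rightarrow> ('v \<times> 'v \<Rightarrow> rat) \<Rightarrow> 'v \<Rightarrow> rat" where
  "excess A f v = (\<Sum>a\<in>{a\<in>A. fst a = v}. f a) - (\<Sum>a\<in>{a\<in>A. snd a = v}. f a)"

definition is_transshipment ::
  "'v set \<Rightarrow> ('v \<times> 'v) set \<Rightarrow> ('v \<times> 'v \<Rightarrow> rat) \<Rightarrow> ('v \<Rightarrow> rat set) \<Rightarrow> ('v \<times> 'v \<Rightarrow> rat) \<Rightarrow> bool" where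
  "is_transshipment VD A c B f \<longleftrightarrow>
     (\<forall>a\<in>A. 0 \<le> f a \<and> f a \<le> c a) \<and> (\<forall>v\<in>VD. excess A f v \<in> B v)"

definition tval :: "'v set \<Rightarrow> ('v \<times> 'v) set \<Rightarrow> ('v \<times> 'v \<Rightarrow> rat) \<Rightarrow> rat" where
  "tval U A f = (\<Sum>u\<in>U. excess A f u)"

(* The constructed instance: vertices of G are Inl v, edges of G are Inr e *)
definition red_V :: "'a set \<Rightarrow> 'a set set \<Rightarrow> ('a + 'a set) set" where
  "red_V V E = Inl ` V \<union> Inr ` E"

definition red_U :: "'a set set \<Rightarrow> ('a + 'a set) set" where
  "red_U E = Inr ` E"

definition red_W :: "'a set \<Rightarrow> ('a + 'a set) set" where
  "red_W V = Inl ` V"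

definition red_A :: "'a set set \<Rightarrow> (('a + 'a set) \<times> ('a + 'a set)) set" where
  "red_A E = {(Inr e, Inl u) | e u. e \<in> E \<and> u \<in> e}"

definition red_c :: "('a + 'a set) \<times> ('a + 'a set) \<Rightarrow> rat" where
  "red_c a = 1"

definition red_B :: "rat \<Rightarrow> ('a + 'a set) \<Rightarrow> rat set" where
  "red_B \<tau> x = (case x of Inr e \<Rightarrow> {0, 1} | Inl v \<Rightarrow> {-\<tau>..0})"

end

theory Submission
  imports Defs
begin

text \<open>
  Read the flow on the two arcs leaving an edge node e as a split of e between its endpoints.
  Then a transshipment of value at least |E| - k is the same as a set F of at most k edges (those
  with excess 0) together with a fractional orientation of G - F: each remaining edge spreads
  weight 1 over its endpoints and each vertex receives at most tau.  By double counting, such an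
  orientation exists only if every edge set S spans at least |S| / tau vertices, and this counting
  condition is equivalent to rho*(G - F) <= tau.  Conversely, writing tau = P / Q, the counting
  condition is exactly Hall's condition for assigning the Q copies of each edge injectively to
  the P copies of its endpoints; counting the copies in a Hall matching yields the orientation.
\<close>

section \<open>Hall's marriage theorem\<close>

definition hall_condition :: "'i set \<Rightarrow> ('i \<Rightarrow> 'x set) \<Rightarrow> bool" where
  "hall_condition I A \<longleftrightarrow> (\<forall>J\<subseteq>I. card J \<le> card (\<Union>(A ` J)))"

lemma hall_condition_subset: "hall_condition I A \<Longrightarrow> J \<subseteq> I \<Longrightarrow> hall_condition J A"
  unfolding hall_condition_def by blast

lemma hall_condition_finite:
  assumes "hall_condition I A" and "i \<in> I"
  shows "finite (A i)" and "A i \<noteq> {}"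
proof -
  have "card {i} \<le> card (\<Union>(A ` {i}))"
    using assms unfolding hall_condition_def by blast
  then have "0 < card (A i)" by simp
  then show "finite (A i)" and "A i \<noteq> {}" by (auto simp: card_gt_0_iff)
qed

lemma hall_condition_Diff_tight:
  assumes fin: "finite I" and hall: "hall_condition I A"
    and J: "J \<subseteq> I" and tight: "card (\<Union>(A ` J)) \<le> card J"
  shows "hall_condition (I - J) (\<lambda>i. A i - \<Union>(A ` J))"
  unfolding hall_condition_def
proof (intro allI impI)
  fix K assume K: "K \<subseteq> I - J"
  let ?X = "\<Union>(A ` J)" and ?Y = "\<Union>(A ` (K \<union> J))"
  have KJ: "K \<union> J \<subseteq> I" using K J by blast
  have "finite (K \<union> J)" using KJ fin by (rule finite_subset)
  then have fin_Y: "finite ?Y" using KJ hall_condition_finite[OF hall] by blast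
  have "(\<Union>i\<in>K. A i - ?X) = ?Y - ?X" by blast
  then have "card (\<Union>i\<in>K. A i - ?X) = card ?Y - card ?X"
    using fin_Y by (simp add: card_Diff_subset finite_subset[OF _ fin_Y])
  moreover have "card ?X = card J" using hall J tight unfolding hall_condition_def by (meson le_antisym)
  moreover have "card (K \<union> J) = card K + card J"
    using K J fin by (intro card_Un_disjoint) (auto intro: finite_subset)
  moreover have "card (K \<union> J) \<le> card ?Y" using hall KJ unfolding hall_condition_def by blast
  ultimately show "card K \<le> card (\<Union>i\<in>K. A i - ?X)" by linarith
qed

lemma hall_condition_Diff_singleton:
  assumes surplus: "\<forall>J\<subseteq>I. J \<noteq> {} \<longrightarrow> J \<noteq> I \<longrightarrow> card J < card (\<Union>(A ` J))"
    and "i \<in> I"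
  shows "hall_condition (I - {i}) (\<lambda>j. A j - {x})"
  unfolding hall_condition_def
proof (intro allI impI)
  fix K assume K: "K \<subseteq> I - {i}"
  show "card K \<le> card (\<Union>j\<in>K. A j - {x})"
  proof (cases "K = {}")
    case False
    with K surplus \<open>i \<in> I\<close> have less: "card K < card (\<Union>(A ` K))" by blast
    then have "finite (\<Union>(A ` K))" using card.infinite by force
    moreover have "(\<Union>j\<in>K. A j - {x}) = \<Union>(A ` K) - {x}" by blast
    ultimately have "card (\<Union>(A ` K)) - 1 \<le> card (\<Union>j\<in>K. A j - {x})"
      by (simp add: card_Diff_singleton_if)
    with less show ?thesis by linarith
  qed simp
qed

theorem Hall_marriage:
  assumes "finite I" and "hall_condition I A"
  shows "\<exists>g. inj_on g I \<and> (\<forall>i\<in>I. g i \<in> A i)"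
  using assms
proof (induction "card I" arbitrary: I A rule: less_induct)
  case less
  show ?case
  proof (cases "\<exists>J\<subseteq>I. J \<noteq> {} \<and> J \<noteq> I \<and> card (\<Union>(A ` J)) \<le> card J")
    case True
    then obtain J where tight: "J \<subseteq> I" "J \<noteq> {}" "J \<noteq> I" "card (\<Union>(A ` J)) \<le> card J"
      by blast
    have "card J < card I" and "card (I - J) < card I"
      using tight less.prems by (auto intro: psubset_card_mono)
    have "finite J" using tight(1) less.prems(1) by (rule finite_subset)
    moreover have "hall_condition J A" using less.prems(2) tight(1) by (rule hall_condition_subset)
    ultimately obtain g1 where g1: "inj_on g1 J" "\<forall>i\<in>J. g1 i \<in> A i"
      using less.hyps[OF \<open>card J < card I\<close>] by blast
    obtain g2 where g2: "inj_on g2 (I - J)" "\<forall>i\<in>I - J. g2 i \<in> A i - \<Union>(A ` J)"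
      using less.hyps[OF \<open>card (I - J) < card I\<close>] hall_condition_Diff_tight[OF less.prems tight(1,4)]
        less.prems(1) by blast
    have "inj_on (\<lambda>i. if i \<in> J then g1 i else g2 i) (J \<union> (I - J))"
      using g1 g2 by (intro inj_on_disjoint_Un) auto
    moreover have "J \<union> (I - J) = I" using tight(1) by blast
    ultimately show ?thesis using g1 g2 by (intro exI[of _ "\<lambda>i. if i \<in> J then g1 i else g2 i"]) auto
  next
    case False
    then have surplus: "\<forall>J\<subseteq>I. J \<noteq> {} \<longrightarrow> J \<noteq> I \<longrightarrow> card J < card (\<Union>(A ` J))"
      using leI by blast
    show ?thesis
    proof (cases "I = {}")
      case False
      then obtain i x where i: "i \<in> I" and x: "x \<in> A i"
        using hall_condition_finite(2)[OF less.prems(2)] by blast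
      have "card (I - {i}) < card I" using less.prems(1) i by (rule card_Diff1_less)
      then obtain g where g: "inj_on g (I - {i})" "\<forall>j\<in>I - {i}. g j \<in> A j - {x}"
        using less.hyps finite_Diff[OF less.prems(1)] hall_condition_Diff_singleton[OF surplus i]
        by blast
      have "inj_on (g(i := x)) I"
        using g i unfolding inj_on_def by auto
      then show ?thesis using g x by (intro exI[of _ "g(i := x)"]) auto
    qed simp
  qed
qed

section \<open>Maximum density and fractional orientations\<close>

lemma simple_graph_subset: "simple_graph V E \<Longrightarrow> E' \<subseteq> E \<Longrightarrow> simple_graph V E'"
  unfolding simple_graph_def by blast

lemma simple_graph_finite_edges:
  assumes "simple_graph V E"
  shows "finite E"
proof (rule finite_subset)
  show "E \<subseteq> Pow V" using assms unfolding simple_graph_def by blast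
  show "finite (Pow V)" using assms unfolding simple_graph_def by simp
qed

lemma simple_graph_edge:
  assumes "simple_graph V E" and "e \<in> E"
  shows "e \<subseteq> V" and "finite e" and "e \<noteq> {}"
  using assms unfolding simple_graph_def by (auto intro: card_ge_0_finite)

lemma rho_star_le_iff_subgraph_density:
  assumes G: "simple_graph V E"
  shows "rho_star V E \<le> \<tau> \<longleftrightarrow>
    (\<forall>V' E'. V' \<subseteq> V \<and> E' \<subseteq> E \<and> (\<forall>e\<in>E'. e \<subseteq> V') \<longrightarrow> density V' E' \<le> \<tau>)"
proof -
  let ?sub = "\<lambda>V' E'. V' \<subseteq> V \<and> E' \<subseteq> E \<and> (\<forall>e\<in>E'. e \<subseteq> V')"
  let ?D = "{density V' E' | V' E'. ?sub V' E'}"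
  have "?D \<subseteq> (\<lambda>(V', E'). density V' E') ` (Pow V \<times> Pow E)" by auto
  moreover have "finite (Pow V \<times> Pow E)"
    using G simple_graph_finite_edges[OF G] unfolding simple_graph_def by simp
  ultimately have "finite ?D" by (rule finite_subset[OF _ finite_imageI])
  moreover have "?sub {} {}" by simp
  then have "?D \<noteq> {}" by blast
  ultimately have "rho_star V E \<le> \<tau> \<longleftrightarrow> (\<forall>d\<in>?D. d \<le> \<tau>)"
    unfolding rho_star_def by (rule Max_le_iff)
  also have "\<dots> \<longleftrightarrow> (\<forall>V' E'. ?sub V' E' \<longrightarrow> density V' E' \<le> \<tau>)" by blast
  finally show ?thesis .
qed

lemma rho_star_le_iff:
  assumes G: "simple_graph V E" and "0 \<le> \<tau>"
  shows "rho_star V E \<le> \<tau> \<longleftrightarrow> (\<forall>S\<subseteq>E. of_nat (card S) \<le> \<tau> * of_nat (card (\<Union>S)))"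
proof -
  have fin_V: "finite V" using G unfolding simple_graph_def by blast
  show ?thesis unfolding rho_star_le_iff_subgraph_density[OF G]
  proof (intro iffI allI impI)
    fix S assume dens: "\<forall>V' E'. V' \<subseteq> V \<and> E' \<subseteq> E \<and> (\<forall>e\<in>E'. e \<subseteq> V') \<longrightarrow> density V' E' \<le> \<tau>"
      and S: "S \<subseteq> E"
    have "\<Union>S \<subseteq> V" using S simple_graph_edge(1)[OF G] by blast
    show "of_nat (card S) \<le> \<tau> * of_nat (card (\<Union>S))"
    proof (cases "\<Union>S = {}")
      case True
      then have "S = {}" using S simple_graph_edge(3)[OF G] by blast
      then show ?thesis by simp
    next
      case False
      have "density (\<Union>S) S \<le> \<tau>" using dens S \<open>\<Union>S \<subseteq> V\<close> by blast
      then have "of_nat (card S) / of_nat (card (\<Union>S)) \<le> \<tau>"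
        unfolding density_def if_not_P[OF False] .
      moreover have "0 < card (\<Union>S)"
        using False \<open>\<Union>S \<subseteq> V\<close> fin_V by (simp add: card_gt_0_iff finite_subset)
      ultimately show ?thesis by (simp add: pos_divide_le_eq mult.commute)
    qed
  next
    fix V' E' assume count: "\<forall>S\<subseteq>E. of_nat (card S) \<le> \<tau> * of_nat (card (\<Union>S))"
      and sub: "V' \<subseteq> V \<and> E' \<subseteq> E \<and> (\<forall>e\<in>E'. e \<subseteq> V')"
    show "density V' E' \<le> \<tau>"
    proof (cases "V' = {}")
      case True
      then show ?thesis using \<open>0 \<le> \<tau>\<close> by (simp add: density_def)
    next
      case False
      have fin_V': "finite V'" using sub fin_V finite_subset by blast
      have "card (\<Union>E') \<le> card V'" using sub fin_V' by (intro card_mono) auto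
      then have "\<tau> * of_nat (card (\<Union>E')) \<le> \<tau> * of_nat (card V')"
        using \<open>0 \<le> \<tau>\<close> by (simp add: mult_left_mono)
      moreover have "of_nat (card E') \<le> \<tau> * of_nat (card (\<Union>E'))" using count sub by blast
      moreover have "0 < card V'" using False fin_V' by (simp add: card_gt_0_iff)
      ultimately show ?thesis using False by (simp add: density_def divide_le_eq mult.commute)
    qed
  qed
qed

definition fractional_orientation :: "'a set \<Rightarrow> 'a set set \<Rightarrow> rat \<Rightarrow> ('a set \<Rightarrow> 'a \<Rightarrow> rat) \<Rightarrow> bool" where
  "fractional_orientation V E \<tau> h \<longleftrightarrow>
     (\<forall>e\<in>E. (\<forall>u\<in>e. 0 \<le> h e u) \<and> (\<Sum>u\<in>e. h e u) = 1) \<and>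
     (\<forall>v\<in>V. (\<Sum>e\<in>{e\<in>E. v \<in> e}. h e v) \<le> \<tau>)"

lemma fractional_orientation_card_le:
  assumes G: "simple_graph V E" and h: "fractional_orientation V E \<tau> h" and S: "S \<subseteq> E"
  shows "of_nat (card S) \<le> \<tau> * of_nat (card (\<Union>S))"
proof -
  have fin_E: "finite E" using G by (rule simple_graph_finite_edges)
  have fin_S: "finite S" using S fin_E by (rule finite_subset)
  have VS: "\<Union>S \<subseteq> V" using S simple_graph_edge(1)[OF G] by blast
  then have fin_US: "finite (\<Union>S)" using G finite_subset unfolding simple_graph_def by blast
  have "of_nat (card S) = (\<Sum>e\<in>S. \<Sum>u\<in>e. h e u)"
    using h S unfolding fractional_orientation_def by (simp add: subset_iff)
  also have "\<dots> = (\<Sum>e\<in>S. \<Sum>u\<in>{u\<in>\<Union>S. u \<in> e}. h e u)"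
    by (intro sum.cong refl) auto
  also have "\<dots> = (\<Sum>u\<in>\<Union>S. \<Sum>e\<in>{e\<in>S. u \<in> e}. h e u)"
    using fin_S fin_US by (rule sum.swap_restrict)
  also have "\<dots> \<le> (\<Sum>u\<in>\<Union>S. \<Sum>e\<in>{e\<in>E. u \<in> e}. h e u)"
    using S fin_E h unfolding fractional_orientation_def by (intro sum_mono sum_mono2) auto
  also have "\<dots> \<le> (\<Sum>u\<in>\<Union>S. \<tau>)"
    using VS h unfolding fractional_orientation_def by (intro sum_mono) auto
  finally show ?thesis by (simp add: mult.commute)
qed

lemma nonneg_rat_as_fraction:
  assumes "0 \<le> (r::rat)"
  obtains P Q :: nat where "0 < Q" and "r = of_nat P / of_nat Q"
proof -
  obtain p q where pq: "quotient_of r = (p, q)" by fastforce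
  have r: "r = of_int p / of_int q" and "0 < q"
    using quotient_of_div[OF pq] quotient_of_denom_pos[OF pq] by auto
  with assms have "0 \<le> p" by (simp add: zero_le_divide_iff)
  with r \<open>0 < q\<close> show thesis by (intro that[of "nat q" "nat p"]) simp_all
qed

lemma hall_condition_edge_copies:
  assumes G: "simple_graph V E" and "0 < Q"
    and count: "\<forall>S\<subseteq>E. of_nat (card S) \<le> (of_nat P / of_nat Q * of_nat (card (\<Union>S)) :: rat)"
  shows "hall_condition (E \<times> {..<Q}) (\<lambda>x. fst x \<times> {..<P})"
  unfolding hall_condition_def
proof (intro allI impI)
  fix J assume J: "J \<subseteq> E \<times> {..<Q}"
  let ?S = "fst ` J"
  have "?S \<subseteq> E" using J by auto
  then have fin_S: "finite ?S" using simple_graph_finite_edges[OF G] by (rule finite_subset)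
  have "J \<subseteq> ?S \<times> {..<Q}" using J by (auto simp: mem_Times_iff intro: rev_image_eqI)
  then have "card J \<le> card (?S \<times> {..<Q})" using fin_S by (intro card_mono) simp_all
  also have "\<dots> = card ?S * Q" by (simp add: card_cartesian_product)
  also have "\<dots> \<le> card (\<Union>?S) * P"
  proof -
    have "of_nat (card ?S) \<le> (of_nat P / of_nat Q * of_nat (card (\<Union>?S)) :: rat)"
      using count \<open>?S \<subseteq> E\<close> by blast
    then have "of_nat (card ?S) * of_nat Q \<le> (of_nat P * of_nat (card (\<Union>?S)) :: rat)"
      using \<open>0 < Q\<close> by (simp add: pos_le_divide_eq)
    then show ?thesis by (metis mult.commute of_nat_le_iff of_nat_mult)
  qed
  also have "\<dots> = card (\<Union>x\<in>J. fst x \<times> {..<P})"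
  proof -
    have "(\<Union>x\<in>J. fst x \<times> {..<P}) = (\<Union>?S) \<times> {..<P}" by auto
    then show ?thesis by (simp only: card_cartesian_product card_lessThan)
  qed
  finally show "card J \<le> card (\<Union>x\<in>J. fst x \<times> {..<P})" .
qed

lemma fractional_orientation_of_assignment:
  assumes G: "simple_graph V E" and "0 < Q"
    and inj: "inj_on g (E \<times> {..<Q})" and g: "\<forall>x\<in>E \<times> {..<Q}. g x \<in> fst x \<times> {..<P}"
  shows "fractional_orientation V E (of_nat P / of_nat Q)
           (\<lambda>e u. of_nat (card {i\<in>{..<Q}. fst (g (e, i)) = u}) / of_nat Q)"
proof -
  define c where "c e u = card {i\<in>{..<Q}. fst (g (e, i)) = u}" for e u
  have fin_E: "finite E" using G by (rule simple_graph_finite_edges)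
  have sum_c: "(\<Sum>u\<in>e. c e u) = Q" if "e \<in> E" for e
  proof -
    have "(\<Sum>u\<in>e. c e u) = card (\<Union>u\<in>e. {i\<in>{..<Q}. fst (g (e, i)) = u})"
      unfolding c_def using simple_graph_edge(2)[OF G that] by (intro card_UN_disjoint[symmetric]) auto
    also have "(\<Union>u\<in>e. {i\<in>{..<Q}. fst (g (e, i)) = u}) = {..<Q}"
      using g that by force
    finally show ?thesis by simp
  qed
  have load_c: "(\<Sum>e\<in>{e\<in>E. v \<in> e}. c e v) \<le> P" for v
  proof -
    let ?X = "SIGMA e:E. {i\<in>{..<Q}. fst (g (e, i)) = v}"
    have "(\<Sum>e\<in>{e\<in>E. v \<in> e}. c e v) \<le> (\<Sum>e\<in>E. c e v)"
      using fin_E by (intro sum_mono2) auto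
    also have "\<dots> = card ?X" unfolding c_def using fin_E by (simp add: card_SigmaI)
    also have "\<dots> \<le> card ({v} \<times> {..<P})"
    proof (rule card_inj_on_le)
      show "inj_on g ?X" using inj by (rule inj_on_subset) auto
      show "g ` ?X \<subseteq> {v} \<times> {..<P}" using g by force
    qed simp
    finally show ?thesis by simp
  qed
  have "(\<Sum>u\<in>e. of_nat (c e u) / of_nat Q) = (1::rat)" if "e \<in> E" for e
    using sum_c[OF that] \<open>0 < Q\<close> by (simp flip: sum_divide_distrib of_nat_sum)
  moreover have "(\<Sum>e\<in>{e\<in>E. v \<in> e}. of_nat (c e v) / of_nat Q) \<le> (of_nat P / of_nat Q :: rat)" for v
    using load_c[of v] by (simp flip: sum_divide_distrib of_nat_sum add: divide_right_mono)
  ultimately show ?thesis unfolding fractional_orientation_def c_def by simp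
qed

lemma fractional_orientation_exists:
  assumes G: "simple_graph V E" and "0 \<le> \<tau>"
    and count: "\<forall>S\<subseteq>E. of_nat (card S) \<le> \<tau> * of_nat (card (\<Union>S))"
  shows "\<exists>h. fractional_orientation V E \<tau> h"
proof -
  obtain P Q where "0 < Q" and \<tau>: "\<tau> = of_nat P / of_nat Q"
    using nonneg_rat_as_fraction[OF \<open>0 \<le> \<tau>\<close>] .
  have "finite (E \<times> {..<Q})" using simple_graph_finite_edges[OF G] by simp
  moreover have "hall_condition (E \<times> {..<Q}) (\<lambda>x. fst x \<times> {..<P})"
    using hall_condition_edge_copies[OF G \<open>0 < Q\<close>] count unfolding \<tau> by blast
  ultimately obtain g where "inj_on g (E \<times> {..<Q})" "\<forall>x\<in>E \<times> {..<Q}. g x \<in> fst x \<times> {..<P}"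
    using Hall_marriage by blast
  then show ?thesis using fractional_orientation_of_assignment[OF G \<open>0 < Q\<close>] unfolding \<tau> by blast
qed

section \<open>The transshipment instance\<close>

lemma of_nat_card_Diff_subset:
  assumes "finite A" and "B \<subseteq> A"
  shows "(of_nat (card (A - B)) :: 'b::ring_1) = of_nat (card A) - of_nat (card B)"
  using assms by (simp add: card_Diff_subset card_mono finite_subset of_nat_diff)

lemma excess_red_Inr:
  assumes "e \<in> E"
  shows "excess (red_A E) f (Inr e) = (\<Sum>u\<in>e. f (Inr e, Inl u))"
proof -
  have out: "{a\<in>red_A E. fst a = Inr e} = (\<lambda>u. (Inr e, Inl u)) ` e"
    using assms unfolding red_A_def by auto
  have into: "{a\<in>red_A E. snd a = Inr e} = {}" unfolding red_A_def by auto
  show ?thesis unfolding excess_def out into by (simp add: sum.reindex inj_on_def)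
qed

lemma excess_red_Inl: "excess (red_A E) f (Inl v) = - (\<Sum>e\<in>{e\<in>E. v \<in> e}. f (Inr e, Inl v))"
proof -
  have out: "{a\<in>red_A E. fst a = Inl v} = {}" unfolding red_A_def by auto
  have into: "{a\<in>red_A E. snd a = Inl v} = (\<lambda>e. (Inr e, Inl v)) ` {e\<in>E. v \<in> e}"
    unfolding red_A_def by force
  show ?thesis unfolding excess_def out into by (simp add: sum.reindex inj_on_def)
qed

lemma tval_red: "tval (red_U E) (red_A E) f = (\<Sum>e\<in>E. \<Sum>u\<in>e. f (Inr e, Inl u))"
  unfolding tval_def red_U_def by (simp add: sum.reindex excess_red_Inr)

lemma tval_red_eq_card_Diff:
  assumes fin_E: "finite E" and "F \<subseteq> E"
    and "\<forall>e\<in>E. (\<Sum>u\<in>e. f (Inr e, Inl u)) = (if e \<in> F then 0 else 1)"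
  shows "tval (red_U E) (red_A E) f = of_nat (card E) - of_nat (card F)"
proof -
  have "tval (red_U E) (red_A E) f = (\<Sum>e\<in>E. if e \<in> E - F then 1 else 0)"
    unfolding tval_red using assms(3) by (intro sum.cong refl) auto
  also have "\<dots> = of_nat (card (E - F))"
    by (simp only: sum.inter_restrict[OF fin_E, symmetric]) (simp add: Int_absorb1)
  also have "\<dots> = of_nat (card E) - of_nat (card F)"
    using fin_E \<open>F \<subseteq> E\<close> by (rule of_nat_card_Diff_subset)
  finally show ?thesis .
qed

lemma is_transshipment_red_iff:
  "is_transshipment (red_V V E) (red_A E) red_c (red_B \<tau>) f \<longleftrightarrow>
     (\<forall>e\<in>E. \<forall>u\<in>e. 0 \<le> f (Inr e, Inl u) \<and> f (Inr e, Inl u) \<le> 1) \<and>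
     (\<forall>e\<in>E. (\<Sum>u\<in>e. f (Inr e, Inl u)) \<in> {0, 1}) \<and>
     (\<forall>v\<in>V. (\<Sum>e\<in>{e\<in>E. v \<in> e}. f (Inr e, Inl v)) \<le> \<tau>)"
proof -
  have arcs: "(\<forall>a\<in>red_A E. 0 \<le> f a \<and> f a \<le> red_c a) \<longleftrightarrow>
      (\<forall>e\<in>E. \<forall>u\<in>e. 0 \<le> f (Inr e, Inl u) \<and> f (Inr e, Inl u) \<le> 1)"
    unfolding red_A_def red_c_def by blast
  have load_nonneg: "0 \<le> (\<Sum>e\<in>{e\<in>E. v \<in> e}. f (Inr e, Inl v))"
    if "\<forall>e\<in>E. \<forall>u\<in>e. 0 \<le> f (Inr e, Inl u)" for v
    using that by (intro sum_nonneg) auto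
  show ?thesis
    unfolding is_transshipment_def arcs red_V_def ball_Un Ball_image_comp comp_def
    by (auto simp: red_B_def excess_red_Inl excess_red_Inr load_nonneg)
qed

lemma transshipment_imp_fractional_orientation:
  assumes G: "simple_graph V E" and f: "is_transshipment (red_V V E) (red_A E) red_c (red_B \<tau>) f"
  obtains F where "F \<subseteq> E" and "fractional_orientation V (E - F) \<tau> (\<lambda>e u. f (Inr e, Inl u))"
    and "tval (red_U E) (red_A E) f = of_nat (card E) - of_nat (card F)"
proof -
  let ?h = "\<lambda>e u. f (Inr e, Inl u)"
  define F where "F = {e\<in>E. (\<Sum>u\<in>e. ?h e u) = 0}"
  have fin_E: "finite E" using G by (rule simple_graph_finite_edges)
  have "(\<forall>e\<in>E. \<forall>u\<in>e. 0 \<le> ?h e u \<and> ?h e u \<le> 1) \<and> (\<forall>e\<in>E. (\<Sum>u\<in>e. ?h e u) \<in> {0, 1}) \<and>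
      (\<forall>v\<in>V. (\<Sum>e\<in>{e\<in>E. v \<in> e}. ?h e v) \<le> \<tau>)"
    using f by (simp only: is_transshipment_red_iff)
  then have nonneg: "\<forall>e\<in>E. \<forall>u\<in>e. 0 \<le> ?h e u"
    and sums: "\<forall>e\<in>E. (\<Sum>u\<in>e. ?h e u) \<in> {0, 1}"
    and load: "\<forall>v\<in>V. (\<Sum>e\<in>{e\<in>E. v \<in> e}. ?h e v) \<le> \<tau>"
    by blast+
  have "F \<subseteq> E" unfolding F_def by blast
  have one: "(\<Sum>u\<in>e. ?h e u) = 1" if "e \<in> E - F" for e
    using sums that unfolding F_def by auto
  have zero: "(\<Sum>u\<in>e. ?h e u) = 0" if "e \<in> F" for e
    using that unfolding F_def by blast
  have orientation: "fractional_orientation V (E - F) \<tau> ?h"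
    unfolding fractional_orientation_def
  proof (intro conjI ballI)
    fix v assume "v \<in> V"
    have "(\<Sum>e\<in>{e\<in>E - F. v \<in> e}. ?h e v) \<le> (\<Sum>e\<in>{e\<in>E. v \<in> e}. ?h e v)"
      using fin_E nonneg by (intro sum_mono2) auto
    also have "\<dots> \<le> \<tau>" using load \<open>v \<in> V\<close> by blast
    finally show "(\<Sum>e\<in>{e\<in>E - F. v \<in> e}. ?h e v) \<le> \<tau>" .
  qed (use nonneg one in auto)
  moreover have "tval (red_U E) (red_A E) f = of_nat (card E) - of_nat (card F)"
    using one zero by (intro tval_red_eq_card_Diff[OF fin_E \<open>F \<subseteq> E\<close>]) auto
  ultimately show thesis using that \<open>F \<subseteq> E\<close> by blast
qed

lemma fractional_orientation_imp_transshipment: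
  assumes G: "simple_graph V E" and "F \<subseteq> E" and h: "fractional_orientation V (E - F) \<tau> h"
  obtains f where "is_transshipment (red_V V E) (red_A E) red_c (red_B \<tau>) f"
    and "tval (red_U E) (red_A E) f = of_nat (card E) - of_nat (card F)"
proof
  define f where "f a = (case a of (Inr e, Inl u) \<Rightarrow> if e \<in> E - F then h e u else 0 | _ \<Rightarrow> 0)"
    for a :: "('a + 'a set) \<times> ('a + 'a set)"
  have f: "f (Inr e, Inl u) = (if e \<in> E - F then h e u else 0)" for e u
    unfolding f_def by simp
  have fin_E: "finite E" using G by (rule simple_graph_finite_edges)
  have edge_sum: "(\<Sum>u\<in>e. f (Inr e, Inl u)) = (if e \<in> E - F then 1 else 0)" for e
  proof (cases "e \<in> E - F")
    case True
    then show ?thesis using h unfolding fractional_orientation_def by (simp add: f)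
  qed (auto simp: f)
  have arcs: "0 \<le> f (Inr e, Inl u) \<and> f (Inr e, Inl u) \<le> 1" if "e \<in> E" and "u \<in> e" for e u
  proof (cases "e \<in> E - F")
    case True
    have "h e u \<le> (\<Sum>u\<in>e. h e u)"
      using h True \<open>u \<in> e\<close> simple_graph_edge(2)[OF G \<open>e \<in> E\<close>]
      unfolding fractional_orientation_def by (intro member_le_sum) auto
    then show ?thesis using h True \<open>u \<in> e\<close> unfolding f fractional_orientation_def by auto
  qed (auto simp: f)
  have load: "(\<Sum>e\<in>{e\<in>E. v \<in> e}. f (Inr e, Inl v)) \<le> \<tau>" if "v \<in> V" for v
  proof -
    have "(\<Sum>e\<in>{e\<in>E. v \<in> e}. f (Inr e, Inl v)) = (\<Sum>e\<in>{e\<in>E - F. v \<in> e}. h e v)"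
      using fin_E by (simp add: f sum.inter_filter[symmetric]) (intro sum.cong; auto)
    then show ?thesis using h \<open>v \<in> V\<close> unfolding fractional_orientation_def by simp
  qed
  show "is_transshipment (red_V V E) (red_A E) red_c (red_B \<tau>) f"
    unfolding is_transshipment_red_iff using arcs load by (simp add: edge_sum)
  show "tval (red_U E) (red_A E) f = of_nat (card E) - of_nat (card F)"
    using edge_sum by (intro tval_red_eq_card_Diff[OF fin_E \<open>F \<subseteq> E\<close>]) auto
qed

theorem lemma6:
  fixes V :: "'a set" and E :: "'a set set" and \<tau> :: rat and k :: nat
  assumes "simple_graph V E" and "\<tau> \<ge> 0"
  shows "(\<exists>f. is_transshipment (red_V V E) (red_A E) red_c (red_B \<tau>) f \<and>
              tval (red_U E) (red_A E) f \<ge> of_nat (card E) - of_nat k)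
     \<longleftrightarrow> (\<exists>F. F \<subseteq> E \<and> card F \<le> k \<and> rho_star V (E - F) \<le> \<tau>)"
proof
  assume "\<exists>f. is_transshipment (red_V V E) (red_A E) red_c (red_B \<tau>) f \<and>
              tval (red_U E) (red_A E) f \<ge> of_nat (card E) - of_nat k"
  then obtain f where f: "is_transshipment (red_V V E) (red_A E) red_c (red_B \<tau>) f"
    and val: "of_nat (card E) - of_nat k \<le> tval (red_U E) (red_A E) f" by blast
  obtain F where "F \<subseteq> E" and h: "fractional_orientation V (E - F) \<tau> (\<lambda>e u. f (Inr e, Inl u))"
    and "tval (red_U E) (red_A E) f = of_nat (card E) - of_nat (card F)"
    using transshipment_imp_fractional_orientation[OF assms(1) f] .
  with val have "card F \<le> k" by simp
  moreover have G': "simple_graph V (E - F)" using assms(1) by (rule simple_graph_subset) blast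
  then have "rho_star V (E - F) \<le> \<tau>"
    using rho_star_le_iff[OF G' assms(2)] fractional_orientation_card_le[OF G' h] by blast
  ultimately show "\<exists>F. F \<subseteq> E \<and> card F \<le> k \<and> rho_star V (E - F) \<le> \<tau>"
    using \<open>F \<subseteq> E\<close> by blast
next
  assume "\<exists>F. F \<subseteq> E \<and> card F \<le> k \<and> rho_star V (E - F) \<le> \<tau>"
  then obtain F where "F \<subseteq> E" "card F \<le> k" and rho: "rho_star V (E - F) \<le> \<tau>" by blast
  have G': "simple_graph V (E - F)" using assms(1) by (rule simple_graph_subset) blast
  obtain h where "fractional_orientation V (E - F) \<tau> h"
    using fractional_orientation_exists[OF G' assms(2)] rho_star_le_iff[OF G' assms(2)] rho by blast
  then obtain f where "is_transshipment (red_V V E) (red_A E) red_c (red_B \<tau>) f"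
    and "tval (red_U E) (red_A E) f = of_nat (card E) - of_nat (card F)"
    using fractional_orientation_imp_transshipment[OF assms(1) \<open>F \<subseteq> E\<close>] by blast
  with \<open>card F \<le> k\<close> show "\<exists>f. is_transshipment (red_V V E) (red_A E) red_c (red_B \<tau>) f \<and>
              tval (red_U E) (red_A E) f \<ge> of_nat (card E) - of_nat k" by auto
qed

end
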